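(* For every integer $m\ge2$ and every $\boldsymbol{a}\in U_{\mathbb{Z}_m}$, the $m$-fold Hurwitz power satisfies $\boldsymbol{a}\star\cdots\star\boldsymbol{a}=\bar{\boldsymbol{1}}=(1,0,0,\dots)$. Consequently, for every prime $p$ and every $n\ge2$, $(U^{(n)}_{\mathbb{Z}_p},\star)$ is an abelian group of order $p^{n-1}$ in which every non-identity element has order $p$, and hence $(U^{(n)}_{\mathbb{Z}_p},\star)\cong(H^{(n-1)}_{\mathbb{Z}_p},+)$.
   Context: For a commutative ring $R$, $H_R$ is the set of sequences in $R$, $H_R^{(n)}$ the set of finite sequences $(a_0,\dots,a_{n-1})$ of length $n$ with componentwise addition, $U_R=\{\boldsymbol a\in H_R:a_0=1\}$ and $U_R^{(n)}$ the length-$n$ sequences with first term $1$. The Hurwitz product is $(\boldsymbol{a}\star\boldsymbol{b})_k=\sum_{h=0}^k\binom{k}{h}a_hb_{k-h}$ (on length-$n$ sequences, computed for $k=0,\dots,n-1$). $\mathbb{Z}_m=\mathbb{Z}/m\mathbb{Z}$. *)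

theory Defs
  imports "Berlekamp_Zassenhaus.Finite_Field" "HOL-Algebra.Multiplicative_Group"
begin

text \<open>Sequences in a commutative ring R are functions nat => R.
  Z_m is modelled by the type 'm mod_ring, where m = CARD('m).\<close>

definition hurwitz_prod :: "(nat \<Rightarrow> 'a::comm_ring_1) \<Rightarrow> (nat \<Rightarrow> 'a) \<Rightarrow> nat \<Rightarrow> 'a" where
  "hurwitz_prod a b = (\<lambda>k. \<Sum>h = 0..k. of_nat (k choose h) * a h * b (k - h))"

definition hurwitz_one :: "nat \<Rightarrow> 'a::comm_ring_1" where
  "hurwitz_one = (\<lambda>k. if k = 0 then 1 else 0)"

definition U_seq :: "(nat \<Rightarrow> 'a::comm_ring_1) set" where
  "U_seq = {a. a 0 = 1}"

primrec hurwitz_pow :: "(nat \<Rightarrow> 'a::comm_ring_1) \<Rightarrow> nat \<Rightarrow> nat \<Rightarrow> 'a" where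
  "hurwitz_pow a 0 = hurwitz_one"
| "hurwitz_pow a (Suc j) = hurwitz_prod a (hurwitz_pow a j)"

text \<open>Length-n sequences (a_0,...,a_{n-1}) are represented canonically as
  sequences vanishing from index n on.\<close>
definition H_fin :: "nat \<Rightarrow> (nat \<Rightarrow> 'a::comm_ring_1) set" where
  "H_fin n = {a. \<forall>k\<ge>n. a k = 0}"

definition U_fin :: "nat \<Rightarrow> (nat \<Rightarrow> 'a::comm_ring_1) set" where
  "U_fin n = {a \<in> H_fin n. a 0 = 1}"

definition hurwitz_prod_fin :: "nat \<Rightarrow> (nat \<Rightarrow> 'a::comm_ring_1) \<Rightarrow> (nat \<Rightarrow> 'a) \<Rightarrow> nat \<Rightarrow> 'a" where
  "hurwitz_prod_fin n a b = (\<lambda>k. if k < n then hurwitz_prod a b k else 0)"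

definition U_group :: "nat \<Rightarrow> (nat \<Rightarrow> 'a::comm_ring_1) monoid" where
  "U_group n = \<lparr>partial_object.carrier = U_fin n, monoid.mult = hurwitz_prod_fin n, monoid.one = hurwitz_one\<rparr>"

definition H_add_group :: "nat \<Rightarrow> (nat \<Rightarrow> 'a::comm_ring_1) monoid" where
  "H_add_group n = \<lparr>partial_object.carrier = H_fin n, monoid.mult = (\<lambda>a b k. a k + b k), monoid.one = (\<lambda>_. 0)\<rparr>"

end

theory Submission
  imports Defs
begin

text \<open>
  Hurwitz series are exponential generating functions, and the shift
  \<open>D a = (a\<^sub>1, a\<^sub>2, \<dots>)\<close> is a derivation of the Hurwitz product. Hence
  \<open>D (a^N) = N \<cdot> (D a \<star> a^(N-1))\<close> for Hurwitz powers, which vanishes as soon as \<open>N = 0\<close>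
  in the ring; if moreover \<open>a\<^sub>0 = 1\<close>, this forces \<open>a^N = 1\<close>. So over \<open>\<int>\<^sub>m\<close> every
  element of \<open>U^(n)\<close> has order dividing \<open>m\<close>.

  Let \<open>e\<^sub>i\<close> be the sequence with entries \<open>1\<close> at positions \<open>0\<close> and \<open>i + 1\<close> and \<open>0\<close> elsewhere.
  If \<open>s\<close> is the least index with \<open>c\<^sub>s \<noteq> 0\<close>, the first non-zero coefficient after the constant
  term of \<open>e\<^sub>0^c\<^sub>0 \<star> \<dots> \<star> e\<^sub>n\<^sub>-\<^sub>2^c\<^sub>n\<^sub>-\<^sub>2\<close> is \<open>c\<^sub>s\<close>, at position \<open>s + 1\<close>. Hence
  \<open>c \<mapsto> \<Prod>\<^sub>i e\<^sub>i^c\<^sub>i\<close> is an injective homomorphism \<open>(H^(n-1), +) \<rightarrow> (U^(n), \<star>)\<close>, and it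
  is bijective because both groups have \<open>m^(n-1)\<close> elements.
\<close>

section \<open>The Hurwitz product and its derivation\<close>

definition hurwitz_deriv :: "(nat \<Rightarrow> 'a) \<Rightarrow> nat \<Rightarrow> 'a" where
  "hurwitz_deriv a = (\<lambda>k. a (Suc k))"

lemma hurwitz_prod_0 [simp]: "hurwitz_prod a b 0 = a 0 * b 0"
  by (simp add: hurwitz_prod_def)

lemma hurwitz_prod_atMost: "hurwitz_prod a b k = (\<Sum>h\<le>k. of_nat (k choose h) * a h * b (k - h))"
  by (simp add: hurwitz_prod_def atLeast0AtMost)

lemma hurwitz_deriv_prod:
  "hurwitz_prod a b (Suc k) = hurwitz_prod (hurwitz_deriv a) b k + hurwitz_prod a (hurwitz_deriv b) k"
proof -
  define S where "S = (\<Sum>h\<le>k. of_nat (k choose Suc h) * a (Suc h) * b (k - h))"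
  have "hurwitz_prod a b (Suc k)
      = a 0 * b (Suc k) + (\<Sum>h\<le>k. of_nat (Suc k choose Suc h) * a (Suc h) * b (k - h))"
    unfolding hurwitz_prod_atMost by (subst sum.atMost_Suc_shift) simp
  also have "\<dots> = hurwitz_prod (hurwitz_deriv a) b k + (a 0 * b (Suc k) + S)"
    by (simp add: S_def hurwitz_prod_atMost hurwitz_deriv_def sum.distrib algebra_simps)
  also have "a 0 * b (Suc k) + S = hurwitz_prod a (hurwitz_deriv b) k"
  proof -
    have "S = (\<Sum>h<k. of_nat (k choose Suc h) * a (Suc h) * b (Suc (k - Suc h)))"
      unfolding S_def lessThan_Suc_atMost[symmetric]
      by (simp add: Suc_diff_Suc binomial_eq_0 del: binomial_Suc_Suc)
    then show ?thesis
      unfolding hurwitz_prod_def atLeast0AtMost lessThan_Suc_atMost[symmetric] hurwitz_deriv_def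
      by (subst sum.lessThan_Suc_shift) (simp add: Suc_diff_le)
  qed
  finally show ?thesis .
qed

lemma hurwitz_prod_add_left:
  "hurwitz_prod (\<lambda>k. f k + g k) b k = hurwitz_prod f b k + hurwitz_prod g b k"
  by (simp add: hurwitz_prod_def sum.distrib algebra_simps)

lemma hurwitz_prod_add_right:
  "hurwitz_prod a (\<lambda>k. f k + g k) k = hurwitz_prod a f k + hurwitz_prod a g k"
  by (simp add: hurwitz_prod_def sum.distrib algebra_simps)

lemma hurwitz_prod_scale_right: "hurwitz_prod a (\<lambda>k. c * f k) k = c * hurwitz_prod a f k"
  by (simp add: hurwitz_prod_def sum_distrib_left algebra_simps)

lemma hurwitz_prod_zero_right: "hurwitz_prod a (\<lambda>k. 0) k = 0"
  by (simp add: hurwitz_prod_def)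

lemma hurwitz_deriv_hurwitz_prod:
  "hurwitz_deriv (hurwitz_prod a b) =
     (\<lambda>k. hurwitz_prod (hurwitz_deriv a) b k + hurwitz_prod a (hurwitz_deriv b) k)"
  by (rule ext) (simp add: hurwitz_deriv_def hurwitz_deriv_prod)

lemma hurwitz_deriv_one: "hurwitz_deriv hurwitz_one = (\<lambda>k. 0)"
  by (rule ext) (simp add: hurwitz_deriv_def hurwitz_one_def)

lemma hurwitz_prod_commute: "hurwitz_prod a b = hurwitz_prod b a"
proof -
  have "hurwitz_prod a b k = hurwitz_prod b a k" for k
    by (induction k arbitrary: a b) (simp_all add: mult.commute hurwitz_deriv_prod add.commute)
  then show ?thesis by blast
qed

lemma hurwitz_prod_assoc: "hurwitz_prod a (hurwitz_prod b c) = hurwitz_prod (hurwitz_prod a b) c"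
proof -
  have "hurwitz_prod a (hurwitz_prod b c) k = hurwitz_prod (hurwitz_prod a b) c k" for k
  proof (induction k arbitrary: a b c)
    case (Suc k)
    show ?case
      by (simp add: hurwitz_deriv_prod hurwitz_deriv_hurwitz_prod hurwitz_prod_add_right
                    hurwitz_prod_add_left Suc.IH add.assoc)
  qed (simp add: mult.assoc)
  then show ?thesis by blast
qed

lemma hurwitz_prod_one_left: "hurwitz_prod hurwitz_one x = x"
proof
  fix k
  have "hurwitz_prod hurwitz_one x k = (\<Sum>h\<le>k. if h = 0 then x k else 0)"
    unfolding hurwitz_prod_atMost hurwitz_one_def by (intro sum.cong) auto
  then show "hurwitz_prod hurwitz_one x k = x k" by simp
qed

lemma hurwitz_pow_0: "hurwitz_pow a j 0 = a 0 ^ j"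
  by (induction j) (simp_all add: hurwitz_one_def)

lemma hurwitz_deriv_hurwitz_pow:
  "hurwitz_deriv (hurwitz_pow a (Suc j)) =
     (\<lambda>k. of_nat (Suc j) * hurwitz_prod (hurwitz_deriv a) (hurwitz_pow a j) k)"
proof (induction j)
  case 0
  show ?case by (simp add: hurwitz_deriv_hurwitz_prod hurwitz_deriv_one hurwitz_prod_zero_right)
next
  case (Suc j)
  have swap: "hurwitz_prod a (hurwitz_prod (hurwitz_deriv a) (hurwitz_pow a j)) =
      hurwitz_prod (hurwitz_deriv a) (hurwitz_pow a (Suc j))"
    by (simp add: hurwitz_prod_assoc hurwitz_prod_commute[of a "hurwitz_deriv a"])
  show ?case
    by (simp only: hurwitz_pow.simps(2)[of a "Suc j"] hurwitz_deriv_hurwitz_prod Suc.IH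
                   hurwitz_prod_scale_right swap) (simp add: algebra_simps)
qed

lemma hurwitz_pow_eq_one:
  fixes a :: "nat \<Rightarrow> 'a::comm_ring_1"
  assumes "of_nat N = (0::'a)" and "a 0 = 1"
  shows "hurwitz_pow a N = hurwitz_one"
proof
  fix k
  show "hurwitz_pow a N k = hurwitz_one k"
  proof (cases k)
    case 0
    then show ?thesis by (simp add: hurwitz_pow_0 assms(2) hurwitz_one_def)
  next
    case (Suc k')
    moreover have "hurwitz_pow a N (Suc k') = 0"
      using hurwitz_deriv_hurwitz_pow[of a "N - 1"] assms(1)
      by (cases N) (simp_all add: hurwitz_deriv_def fun_eq_iff hurwitz_one_def)
    ultimately show ?thesis by (simp add: hurwitz_one_def)
  qed
qed

section \<open>The truncated unit group\<close>

definition hurwitz_trunc :: "nat \<Rightarrow> (nat \<Rightarrow> 'a::zero) \<Rightarrow> nat \<Rightarrow> 'a" where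
  "hurwitz_trunc n x = (\<lambda>k. if k < n then x k else 0)"

lemma hurwitz_trunc_apply: "hurwitz_trunc n x k = (if k < n then x k else 0)"
  by (simp add: hurwitz_trunc_def)

lemma hurwitz_prod_fin_eq_trunc: "hurwitz_prod_fin n a b = hurwitz_trunc n (hurwitz_prod a b)"
  by (simp add: hurwitz_prod_fin_def hurwitz_trunc_def)

lemma hurwitz_prod_trunc_left: "k < n \<Longrightarrow> hurwitz_prod (hurwitz_trunc n a) b k = hurwitz_prod a b k"
  unfolding hurwitz_prod_def hurwitz_trunc_def by (intro sum.cong) auto

lemma hurwitz_prod_trunc_right: "k < n \<Longrightarrow> hurwitz_prod a (hurwitz_trunc n b) k = hurwitz_prod a b k"
  using hurwitz_prod_trunc_left[of k n b a] by (simp add: hurwitz_prod_commute)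

lemma hurwitz_trunc_one: "0 < n \<Longrightarrow> hurwitz_trunc n hurwitz_one = hurwitz_one"
  by (rule ext) (simp add: hurwitz_trunc_def hurwitz_one_def)

lemma hurwitz_trunc_in_U_fin: "0 < n \<Longrightarrow> x 0 = 1 \<Longrightarrow> hurwitz_trunc n x \<in> U_fin n"
  by (simp add: U_fin_def H_fin_def hurwitz_trunc_def)

lemma hurwitz_trunc_U_fin: "x \<in> U_fin n \<Longrightarrow> hurwitz_trunc n x = x"
  by (auto simp: U_fin_def H_fin_def hurwitz_trunc_def)

lemma U_group_simps [simp]:
  "carrier (U_group n) = U_fin n"
  "one (U_group n) = hurwitz_one"
  by (simp_all add: U_group_def)

lemma U_group_mult: "x \<otimes>\<^bsub>U_group n\<^esub> y = hurwitz_prod_fin n x y"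
  by (simp add: U_group_def)

lemma H_add_group_simps [simp]:
  "carrier (H_add_group n) = H_fin n"
  "monoid.mult (H_add_group n) = (\<lambda>a b k. a k + b k)"
  "one (H_add_group n) = (\<lambda>_. 0)"
  by (simp_all add: H_add_group_def)

lemma hurwitz_prod_fin_assoc:
  "hurwitz_prod_fin n (hurwitz_prod_fin n a b) c = hurwitz_prod_fin n a (hurwitz_prod_fin n b c)"
  unfolding hurwitz_prod_fin_eq_trunc
  by (rule ext) (simp add: hurwitz_trunc_apply hurwitz_prod_trunc_left hurwitz_prod_trunc_right
                           hurwitz_prod_assoc)

lemma hurwitz_prod_fin_commute: "hurwitz_prod_fin n a b = hurwitz_prod_fin n b a"
  unfolding hurwitz_prod_fin_def hurwitz_prod_commute[of a b] ..

lemma comm_monoid_U_group: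
  assumes "0 < n"
  shows "comm_monoid (U_group n)"
proof (rule comm_monoidI, unfold U_group_simps U_group_mult)
  show "hurwitz_prod_fin n a b \<in> U_fin n" if "a \<in> U_fin n" "b \<in> U_fin n" for a b
    using that assms hurwitz_trunc_in_U_fin[of n "hurwitz_prod a b"]
    by (simp add: hurwitz_prod_fin_eq_trunc U_fin_def)
  show "hurwitz_one \<in> U_fin n"
    using assms by (simp add: U_fin_def H_fin_def hurwitz_one_def)
  show "hurwitz_prod_fin n hurwitz_one a = a" if "a \<in> U_fin n" for a
    using that by (simp add: hurwitz_prod_fin_eq_trunc hurwitz_prod_one_left hurwitz_trunc_U_fin)
qed (rule hurwitz_prod_fin_assoc, rule hurwitz_prod_fin_commute)

lemma U_group_pow:
  assumes "0 < n" and "x \<in> U_fin n"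
  shows "x [^]\<^bsub>U_group n\<^esub> m = hurwitz_trunc n (hurwitz_pow x m)"
proof (induction m)
  case 0
  then show ?case using assms(1) by (simp add: hurwitz_trunc_one)
next
  case (Suc m)
  have "x [^]\<^bsub>U_group n\<^esub> Suc m = hurwitz_prod_fin n (hurwitz_trunc n (hurwitz_pow x m)) x"
    using Suc.IH by (simp add: U_group_mult)
  also have "\<dots> = hurwitz_trunc n (hurwitz_pow x (Suc m))"
    by (intro ext) (simp add: hurwitz_prod_fin_eq_trunc hurwitz_trunc_apply hurwitz_prod_trunc_left
                              hurwitz_prod_commute[of x])
  finally show ?case .
qed

lemma U_group_pow_CHAR:
  fixes x :: "nat \<Rightarrow> 'a::comm_ring_1"
  assumes "0 < n" and "x \<in> U_fin n"
  shows "x [^]\<^bsub>U_group n\<^esub> CHAR('a) = \<one>\<^bsub>U_group n\<^esub>"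
  using assms hurwitz_pow_eq_one[of "CHAR('a)" x]
  by (simp add: U_group_pow U_fin_def hurwitz_trunc_one)

lemma comm_group_U_group:
  assumes "0 < n" and "CHAR('a) > 0"
  shows "comm_group (U_group n :: (nat \<Rightarrow> 'a::comm_ring_1) monoid)"
proof -
  interpret comm_monoid "U_group n :: (nat \<Rightarrow> 'a) monoid"
    using assms(1) by (rule comm_monoid_U_group)
  have "group (U_group n :: (nat \<Rightarrow> 'a) monoid)"
  proof (rule group_l_invI)
    fix x assume x: "x \<in> carrier (U_group n :: (nat \<Rightarrow> 'a) monoid)"
    have "x [^]\<^bsub>U_group n\<^esub> (CHAR('a) - 1) \<otimes>\<^bsub>U_group n\<^esub> x = x [^]\<^bsub>U_group n\<^esub> CHAR('a)"
      using assms(2) by (metis Suc_diff_1 nat_pow_Suc)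
    then show "\<exists>y \<in> carrier (U_group n). y \<otimes>\<^bsub>U_group n\<^esub> x = \<one>\<^bsub>U_group n\<^esub>"
      using x U_group_pow_CHAR[OF assms(1)] nat_pow_closed by (metis U_group_simps(1))
  qed
  then show ?thesis
    by (rule group.group_comm_groupI) (rule m_comm)
qed

lemma card_H_fin: "card (H_fin m :: (nat \<Rightarrow> 'a::{finite,comm_ring_1}) set) = CARD('a) ^ m"
proof -
  have "bij_betw (\<lambda>a. restrict a {..<m}) (H_fin m) ({..<m} \<rightarrow>\<^sub>E (UNIV :: 'a set))"
    by (rule bij_betw_byWitness[where f' = "\<lambda>f k. if k < m then f k else 0"])
       (auto simp: H_fin_def fun_eq_iff PiE_def extensional_def)
  then show ?thesis
    by (simp add: bij_betw_same_card card_PiE)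
qed

lemma card_U_fin:
  assumes "0 < n"
  shows "card (U_fin n :: (nat \<Rightarrow> 'a::{finite,comm_ring_1}) set) = CARD('a) ^ (n - 1)"
proof -
  have "bij_betw hurwitz_deriv (U_fin n) (H_fin (n - 1) :: (nat \<Rightarrow> 'a) set)"
    by (rule bij_betw_byWitness[where f' = "\<lambda>c k. if k = 0 then 1 else c (k - 1)"])
       (use assms in \<open>auto simp: U_fin_def H_fin_def hurwitz_deriv_def fun_eq_iff split: nat.split\<close>)
  then show ?thesis
    by (simp add: bij_betw_same_card card_H_fin)
qed

lemma finite_U_fin: "0 < n \<Longrightarrow> finite (U_fin n :: (nat \<Rightarrow> 'a::{finite,comm_ring_1}) set)"
  using card_U_fin[of n, where 'a='a] card.infinite by fastforce

section \<open>Leading coefficients\<close>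

lemma hurwitz_prod_eq_add_if_gap:
  assumes "x 0 = 1" "y 0 = 1" "0 < k" "\<And>h. 0 < h \<Longrightarrow> h < k \<Longrightarrow> x h = 0"
  shows "hurwitz_prod x y k = x k + y k"
proof -
  have "{..k} = insert 0 (insert k {1..<k})"
    using assms(3) by auto
  moreover have "(\<Sum>h\<in>{1..<k}. of_nat (k choose h) * x h * y (k - h)) = 0"
    by (rule sum.neutral) (auto simp: assms(4))
  ultimately show ?thesis
    unfolding hurwitz_prod_atMost using assms(1-3) by (simp add: add.commute)
qed

definition one_below :: "nat \<Rightarrow> (nat \<Rightarrow> 'a::comm_ring_1) \<Rightarrow> bool" where
  "one_below s x \<longleftrightarrow> (\<forall>h<s. x h = hurwitz_one h)"

lemma one_below_mono: "one_below s x \<Longrightarrow> t \<le> s \<Longrightarrow> one_below t x"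
  by (simp add: one_below_def)

lemma one_below_one: "one_below s hurwitz_one"
  by (simp add: one_below_def)

lemma one_below_hurwitz_prod_fin:
  assumes "0 < s" "s < n" and x: "one_below s x" and y: "one_below s y"
  shows "one_below s (hurwitz_prod_fin n x y)" and "hurwitz_prod_fin n x y s = x s + y s"
proof -
  have x0: "x 0 = 1" and y0: "y 0 = 1"
    using assms by (auto simp: one_below_def hurwitz_one_def)
  have sum: "hurwitz_prod_fin n x y k = x k + y k" if "0 < k" "k \<le> s" for k
    using hurwitz_prod_eq_add_if_gap[of x y k] x0 y0 x that assms(2)
    by (simp add: hurwitz_prod_fin_def one_below_def hurwitz_one_def)
  show "hurwitz_prod_fin n x y s = x s + y s"
    using sum assms(1) by simp
  show "one_below s (hurwitz_prod_fin n x y)"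
    using sum x y x0 y0 assms(2) unfolding one_below_def
    by (auto simp: hurwitz_prod_fin_def hurwitz_one_def)
qed

lemma one_below_U_group_pow:
  assumes "0 < s" "s < n" and "one_below s x"
  shows "one_below s (x [^]\<^bsub>U_group n\<^esub> m)" and "(x [^]\<^bsub>U_group n\<^esub> m) s = of_nat m * x s"
proof -
  have "one_below s (x [^]\<^bsub>U_group n\<^esub> m) \<and> (x [^]\<^bsub>U_group n\<^esub> m) s = of_nat m * x s"
  proof (induction m)
    case 0
    then show ?case using assms(1) one_below_one[of s] by (simp add: hurwitz_one_def)
  next
    case (Suc m)
    then show ?case
      using one_below_hurwitz_prod_fin[OF assms(1,2) _ assms(3)] by (simp add: U_group_mult algebra_simps)
  qed
  then show "one_below s (x [^]\<^bsub>U_group n\<^esub> m)" "(x [^]\<^bsub>U_group n\<^esub> m) s = of_nat m * x s"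
    by simp_all
qed

section \<open>Coordinates on \<open>U^(n)\<close> over \<open>\<int>\<^sub>m\<close>\<close>

definition hurwitz_basis :: "nat \<Rightarrow> nat \<Rightarrow> 'a::comm_ring_1" where
  "hurwitz_basis i = (\<lambda>k. if k = 0 \<or> k = Suc i then 1 else 0)"

lemma hurwitz_basis_in_U_fin: "Suc i < n \<Longrightarrow> hurwitz_basis i \<in> U_fin n"
  by (simp add: hurwitz_basis_def U_fin_def H_fin_def)

lemma one_below_hurwitz_basis: "one_below (Suc i) (hurwitz_basis i)"
  by (simp add: one_below_def hurwitz_basis_def hurwitz_one_def)

lemma hurwitz_basis_Suc_self [simp]: "hurwitz_basis i (Suc i) = 1"
  by (simp add: hurwitz_basis_def)

definition nat_of_mod_ring :: "'m::nontriv mod_ring \<Rightarrow> nat" where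
  "nat_of_mod_ring x = nat (to_int_mod_ring x)"

lemma of_nat_nat_of_mod_ring [simp]: "of_nat (nat_of_mod_ring x) = x" for x :: "'m::nontriv mod_ring"
proof -
  have "0 \<le> to_int_mod_ring x"
    using range_to_int_mod_ring[where 'a='m] by auto
  then show ?thesis
    by (simp add: nat_of_mod_ring_def of_int_of_int_mod_ring)
qed

lemma (in group) nat_pow_eq_if_cong:
  fixes N m m' :: nat
  assumes "x \<in> carrier G" "x [^] N = \<one>" "[m = m'] (mod N)"
  shows "x [^] m = x [^] m'"
proof -
  have "ord x dvd N"
    using assms(1,2) pow_eq_id by blast
  moreover have "int N dvd int m' - int m"
    using assms(3) by (simp add: cong_iff_dvd_diff cong_int_iff[symmetric] dvd_diff_commute)
  ultimately have "int (ord x) dvd int m' - int m"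
    by (rule dvd_trans[OF int_dvd_int_iff[THEN iffD2]])
  then show ?thesis
    using assms(1) int_pow_eq[of x "int m" "int m'"] by (simp add: int_pow_int)
qed

text \<open>Powers \<open>g^c\<close> with exponent \<open>c \<in> \<int>\<^sub>m\<close> are well defined because \<open>g^m = 1\<close>.\<close>

lemma U_group_pow_nat_of_mod_ring_add:
  fixes g :: "nat \<Rightarrow> 'm::nontriv mod_ring" and a b :: "'m mod_ring"
  assumes "0 < n" and "g \<in> U_fin n"
  shows "g [^]\<^bsub>U_group n\<^esub> nat_of_mod_ring (a + b) =
      g [^]\<^bsub>U_group n\<^esub> nat_of_mod_ring a \<otimes>\<^bsub>U_group n\<^esub> g [^]\<^bsub>U_group n\<^esub> nat_of_mod_ring b"
proof -
  interpret comm_group "U_group n :: (nat \<Rightarrow> 'm mod_ring) monoid"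
    using assms(1) by (rule comm_group_U_group) simp
  have "(of_nat (nat_of_mod_ring (a + b)) :: 'm mod_ring) = of_nat (nat_of_mod_ring a + nat_of_mod_ring b)"
    by simp
  then have "[nat_of_mod_ring (a + b) = nat_of_mod_ring a + nat_of_mod_ring b] (mod CHAR('m mod_ring))"
    by (simp only: of_nat_eq_iff_cong_CHAR)
  moreover have "g \<in> carrier (U_group n)" "g [^]\<^bsub>U_group n\<^esub> CHAR('m mod_ring) = \<one>\<^bsub>U_group n\<^esub>"
    using assms(2) U_group_pow_CHAR[OF assms] by simp_all
  ultimately have "g [^]\<^bsub>U_group n\<^esub> nat_of_mod_ring (a + b) =
      g [^]\<^bsub>U_group n\<^esub> (nat_of_mod_ring a + nat_of_mod_ring b)"
    by (intro nat_pow_eq_if_cong)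
  then show ?thesis
    using \<open>g \<in> carrier (U_group n)\<close> by (simp add: nat_pow_mult)
qed

definition basis_prod :: "nat \<Rightarrow> nat \<Rightarrow> (nat \<Rightarrow> 'm::nontriv mod_ring) \<Rightarrow> nat \<Rightarrow> 'm mod_ring" where
  "basis_prod n i c =
     finprod (U_group n) (\<lambda>j. hurwitz_basis j [^]\<^bsub>U_group n\<^esub> nat_of_mod_ring (c j)) {..<i}"

lemma basis_pows_in_U_fin:
  assumes "0 < n" "i \<le> n - 1"
  shows "(\<lambda>j. (hurwitz_basis j :: nat \<Rightarrow> 'a::comm_ring_1) [^]\<^bsub>U_group n\<^esub> (k j :: nat)) \<in> {..<i} \<rightarrow> U_fin n"
proof
  interpret comm_monoid "U_group n :: (nat \<Rightarrow> 'a) monoid"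
    using assms(1) by (rule comm_monoid_U_group)
  fix j assume "j \<in> {..<i}"
  then have "(hurwitz_basis j :: nat \<Rightarrow> 'a) \<in> carrier (U_group n)"
    using assms by (simp add: hurwitz_basis_in_U_fin)
  then show "(hurwitz_basis j :: nat \<Rightarrow> 'a) [^]\<^bsub>U_group n\<^esub> k j \<in> U_fin n"
    using nat_pow_closed by simp
qed

lemma basis_prod_0: "0 < n \<Longrightarrow> basis_prod n 0 c = hurwitz_one"
  by (simp add: basis_prod_def comm_monoid.finprod_empty[OF comm_monoid_U_group])

lemma basis_prod_in_U_fin:
  fixes c :: "nat \<Rightarrow> 'm::nontriv mod_ring"
  assumes "0 < n" "i \<le> n - 1"
  shows "basis_prod n i c \<in> U_fin n"
proof -
  interpret comm_monoid "U_group n :: (nat \<Rightarrow> 'm mod_ring) monoid"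
    using assms(1) by (rule comm_monoid_U_group)
  show ?thesis
    using finprod_closed basis_pows_in_U_fin[OF assms, where k="\<lambda>j. nat_of_mod_ring (c j)"]
    by (simp add: basis_prod_def)
qed

lemma basis_prod_Suc:
  fixes c :: "nat \<Rightarrow> 'm::nontriv mod_ring"
  assumes "0 < n" "Suc i \<le> n - 1"
  shows "basis_prod n (Suc i) c =
    hurwitz_prod_fin n (basis_prod n i c) (hurwitz_basis i [^]\<^bsub>U_group n\<^esub> nat_of_mod_ring (c i))"
proof -
  interpret comm_monoid "U_group n :: (nat \<Rightarrow> 'm mod_ring) monoid"
    using assms(1) by (rule comm_monoid_U_group)
  have "(\<lambda>j. hurwitz_basis j [^]\<^bsub>U_group n\<^esub> nat_of_mod_ring (c j)) \<in> {..<Suc i} \<rightarrow> carrier (U_group n)"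
    using basis_pows_in_U_fin[OF assms] by simp
  then show ?thesis
    unfolding basis_prod_def lessThan_Suc
    by (subst finprod_insert)
       (auto simp: U_group_mult hurwitz_prod_fin_commute[of n "hurwitz_basis i [^]\<^bsub>U_group n\<^esub> _"])
qed

lemma basis_prod_add:
  fixes c c' :: "nat \<Rightarrow> 'm::nontriv mod_ring"
  assumes "0 < n" "i \<le> n - 1"
  shows "basis_prod n i (\<lambda>k. c k + c' k) = hurwitz_prod_fin n (basis_prod n i c) (basis_prod n i c')"
proof -
  interpret comm_group "U_group n :: (nat \<Rightarrow> 'm mod_ring) monoid"
    using assms(1) by (rule comm_group_U_group) simp
  let ?f = "\<lambda>c j. hurwitz_basis j [^]\<^bsub>U_group n\<^esub> nat_of_mod_ring (c j) :: nat \<Rightarrow> 'm mod_ring"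
  have f: "?f c \<in> {..<i} \<rightarrow> carrier (U_group n)" "?f c' \<in> {..<i} \<rightarrow> carrier (U_group n)"
    using basis_pows_in_U_fin[OF assms] by simp_all
  have "?f (\<lambda>k. c k + c' k) j = ?f c j \<otimes>\<^bsub>U_group n\<^esub> ?f c' j" if "j \<in> {..<i}" for j
    using that assms by (intro U_group_pow_nat_of_mod_ring_add hurwitz_basis_in_U_fin) auto
  then have "basis_prod n i (\<lambda>k. c k + c' k) =
      finprod (U_group n) (\<lambda>j. ?f c j \<otimes>\<^bsub>U_group n\<^esub> ?f c' j) {..<i}"
    unfolding basis_prod_def using f by (intro finprod_cong' Pi_I m_closed) (auto simp: Pi_iff)
  also have "\<dots> = basis_prod n i c \<otimes>\<^bsub>U_group n\<^esub> basis_prod n i c'"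
    using f by (simp only: finprod_multf basis_prod_def)
  finally show ?thesis by (simp add: U_group_mult)
qed

lemma basis_prod_leading:
  fixes c :: "nat \<Rightarrow> 'm::nontriv mod_ring"
  assumes "0 < n" "s < n - 1" and vanish: "\<And>j. j < s \<Longrightarrow> c j = 0" and "i \<le> n - 1"
  shows "one_below (Suc s) (basis_prod n i c) \<and> basis_prod n i c (Suc s) = (if s < i then c s else 0)"
  using assms(4)
proof (induction i)
  case 0
  then show ?case using one_below_one[of "Suc s"] by (simp add: basis_prod_0 assms(1) hurwitz_one_def)
next
  case (Suc i)
  let ?y = "hurwitz_basis i [^]\<^bsub>U_group n\<^esub> nat_of_mod_ring (c i) :: nat \<Rightarrow> 'm mod_ring"
  have i: "Suc i < n" using Suc.prems assms(1) by linarith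
  have y: "one_below (Suc s) ?y \<and> ?y (Suc s) = (if i = s then c s else 0)"
  proof (cases "i < s")
    case True
    then show ?thesis
      using vanish[of i] one_below_one[of "Suc s"] by (simp add: nat_of_mod_ring_def hurwitz_one_def)
  next
    case False
    have "one_below (Suc i) ?y" "?y (Suc i) = c i"
      using one_below_U_group_pow[where x="hurwitz_basis i :: nat \<Rightarrow> 'm mod_ring", OF _ i one_below_hurwitz_basis]
      by simp_all
    with False show ?thesis
      using one_below_mono[of "Suc i" ?y "Suc s"] by (auto simp: one_below_def hurwitz_one_def)
  qed
  show ?case
    using Suc one_below_hurwitz_prod_fin[of "Suc s" n "basis_prod n i c" ?y] y assms(2)
    by (auto simp: basis_prod_Suc[OF assms(1) Suc.prems])
qed

lemma basis_prod_eq_one_imp_zero: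
  fixes c :: "nat \<Rightarrow> 'm::nontriv mod_ring"
  assumes "0 < n" and "c \<in> H_fin (n - 1)" and "basis_prod n (n - 1) c = hurwitz_one"
  shows "c = (\<lambda>_. 0)"
proof (rule ccontr)
  assume "c \<noteq> (\<lambda>_. 0)"
  then have ex: "\<exists>j. c j \<noteq> 0" by auto
  define s where "s = (LEAST j. c j \<noteq> 0)"
  have cs: "c s \<noteq> 0" and vanish: "\<And>j. j < s \<Longrightarrow> c j = 0"
    using LeastI_ex[OF ex] not_less_Least unfolding s_def by auto
  have "s < n - 1"
    using assms(2) cs by (auto simp: H_fin_def not_less[symmetric])
  then have "basis_prod n (n - 1) c (Suc s) = c s"
    using basis_prod_leading[OF assms(1) \<open>s < n - 1\<close> vanish order.refl] by simp
  then show False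
    using assms(3) cs by (simp add: hurwitz_one_def)
qed

lemma group_H_add_group: "group (H_add_group m :: (nat \<Rightarrow> 'a::comm_ring_1) monoid)"
proof (rule groupI)
  fix x :: "nat \<Rightarrow> 'a" assume "x \<in> carrier (H_add_group m)"
  then show "\<exists>y\<in>carrier (H_add_group m). y \<otimes>\<^bsub>H_add_group m\<^esub> x = \<one>\<^bsub>H_add_group m\<^esub>"
    by (intro bexI[of _ "\<lambda>k. - x k"]) (auto simp: H_fin_def)
qed (auto simp: H_fin_def add.assoc)

lemma basis_prod_iso:
  assumes "0 < n"
  shows "basis_prod n (n - 1) \<in> Group.iso (H_add_group (n - 1)) (U_group n :: (nat \<Rightarrow> 'm::nontriv mod_ring) monoid)"
proof -
  interpret U: comm_group "U_group n :: (nat \<Rightarrow> 'm mod_ring) monoid"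
    using assms by (rule comm_group_U_group) simp
  interpret group_hom "H_add_group (n - 1)" "U_group n :: (nat \<Rightarrow> 'm mod_ring) monoid" "basis_prod n (n - 1)"
    by (intro group_hom.intro group_hom_axioms.intro group_H_add_group U.group_axioms homI)
       (simp_all add: basis_prod_in_U_fin basis_prod_add assms U_group_mult)
  have "inj_on (basis_prod n (n - 1) :: (nat \<Rightarrow> 'm mod_ring) \<Rightarrow> _) (carrier (H_add_group (n - 1)))"
    using basis_prod_eq_one_imp_zero[OF assms] by (subst inj_on_one_iff) auto
  then have inj: "inj_on (basis_prod n (n - 1)) (H_fin (n - 1) :: (nat \<Rightarrow> 'm mod_ring) set)"
    by simp
  have "basis_prod n (n - 1) ` H_fin (n - 1) = (U_fin n :: (nat \<Rightarrow> 'm mod_ring) set)"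
    using basis_prod_in_U_fin[OF assms] finite_U_fin[OF assms] card_image[OF inj]
          card_H_fin[of "n - 1", where 'a="'m mod_ring"] card_U_fin[OF assms, where 'a="'m mod_ring"]
    by (intro card_subset_eq) auto
  then show ?thesis
    using inj homh by (simp add: iso_def bij_betw_def)
qed

lemma U_group_iso_H_add_group:
  assumes "0 < n"
  shows "(U_group n :: (nat \<Rightarrow> 'm::nontriv mod_ring) monoid) \<cong> (H_add_group (n - 1) :: (nat \<Rightarrow> 'm mod_ring) monoid)"
proof -
  have "(H_add_group (n - 1) :: (nat \<Rightarrow> 'm mod_ring) monoid) \<cong> (U_group n :: (nat \<Rightarrow> 'm mod_ring) monoid)"
    by (rule is_isoI[OF basis_prod_iso[OF assms]])
  then show ?thesis
    by (rule group.iso_sym[OF group_H_add_group])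
qed

lemma (in group) ord_eq_prime:
  assumes "x \<in> carrier G" "x \<noteq> \<one>" "x [^] p = \<one>" "prime p"
  shows "ord x = p"
proof -
  have "ord x dvd p"
    using assms(1,3) pow_eq_id by blast
  then show ?thesis
    using assms(1,2,4) ord_eq_1 by (auto simp: prime_nat_iff)
qed

theorem mainTheorem7:
  shows "(\<forall>a :: nat \<Rightarrow> 'm::nontriv mod_ring. a \<in> U_seq \<longrightarrow>
            hurwitz_pow a CARD('m) = hurwitz_one)
       \<and> (\<forall>n::nat. n \<ge> 2 \<longrightarrow>
            comm_group (U_group n :: (nat \<Rightarrow> 'p::prime_card mod_ring) monoid)
          \<and> Coset.order (U_group n :: (nat \<Rightarrow> 'p mod_ring) monoid) = CARD('p) ^ (n - 1)
          \<and> (\<forall>x \<in> carrier (U_group n :: (nat \<Rightarrow> 'p mod_ring) monoid).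
               x \<noteq> \<one>\<^bsub>U_group n :: (nat \<Rightarrow> 'p mod_ring) monoid\<^esub> \<longrightarrow>
               group.ord (U_group n :: (nat \<Rightarrow> 'p mod_ring) monoid) x = CARD('p))
          \<and> (U_group n :: (nat \<Rightarrow> 'p mod_ring) monoid) \<cong>
              (H_add_group (n - 1) :: (nat \<Rightarrow> 'p mod_ring) monoid))"
proof (intro conjI allI impI ballI)
  fix a :: "nat \<Rightarrow> 'm mod_ring"
  assume "a \<in> U_seq"
  then show "hurwitz_pow a CARD('m) = hurwitz_one"
    by (intro hurwitz_pow_eq_one) (auto simp: U_seq_def)
next
  fix n :: nat assume "n \<ge> 2"
  then have n: "0 < n" by simp
  interpret U: comm_group "U_group n :: (nat \<Rightarrow> 'p mod_ring) monoid"
    using n by (rule comm_group_U_group) simp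
  show "comm_group (U_group n :: (nat \<Rightarrow> 'p mod_ring) monoid)" ..
  show "Coset.order (U_group n :: (nat \<Rightarrow> 'p mod_ring) monoid) = CARD('p) ^ (n - 1)"
    using card_U_fin[OF n, where 'a="'p mod_ring"] by (simp add: Coset.order_def)
  show "U.ord x = CARD('p)" if "x \<in> carrier (U_group n)" "x \<noteq> \<one>\<^bsub>U_group n\<^esub>" for x
    using that U_group_pow_CHAR[OF n, of x] prime_card[where 'a='p] by (intro U.ord_eq_prime) simp_all
  show "(U_group n :: (nat \<Rightarrow> 'p mod_ring) monoid) \<cong> (H_add_group (n - 1) :: (nat \<Rightarrow> 'p mod_ring) monoid)"
    using n by (rule U_group_iso_H_add_group)
qed

end
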